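(* Assume $f:\mathbb R^d\to\mathbb R$ is $L$-smooth. For any $(q_0,p_0)\in\mathbb R^d\times\mathbb R^d$ and any step size $\eta>0$ with $\eta^2L\le1$, $$f(\hat q_\eta)-f(q_\eta)\le\frac12\int_0^\eta\int_0^s(G_\tau-G_0)\,d\tau\,ds+\frac34\eta^4L^2\Big(\|p_0\|_2+\frac{1}{\sqrt L}\|\nabla f(q_0)\|_2\Big)^2,$$ where $G_t=\|\nabla f(q_0+tp_0)\|_2^2$.
   Context: $L$-smooth: $f$ differentiable with $\nabla f$ $L$-Lipschitz. Continuous Hamiltonian dynamics from $(q_0,p_0)$: $q_t=q_0+tp_0-\int_0^t\int_0^s\nabla f(q_\tau)\,d\tau\,ds$, $p_t=p_0-\int_0^t\nabla f(q_s)\,ds$ (solution of $\dot q=p$, $\dot p=-\nabla f(q)$). Leapfrog step: $\hat q_\eta=q_0+\eta p_0-\frac{\eta^2}{2}\nabla f(q_0)$, $\hat p_\eta=p_0-\frac\eta2\nabla f(q_0)-\frac\eta2\nabla f(\hat q_\eta)$. *)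

theory Defs
  imports "HOL-Analysis.Analysis"
begin

definition L_smooth :: "(real^'n \<Rightarrow> real) \<Rightarrow> (real^'n \<Rightarrow> real^'n) \<Rightarrow> real \<Rightarrow> bool" where
  "L_smooth f gradf L \<longleftrightarrow>
     (\<forall>x. (f has_derivative (\<lambda>h. gradf x \<bullet> h)) (at x)) \<and>
     (\<forall>x y. norm (gradf x - gradf y) \<le> L * norm (x - y))"

end

theory Submission
  imports Defs
begin

text \<open>Write \<open>e(t) = q\<^sub>t - q\<^sub>0 - t p\<^sub>0 + t\<^sup>2/2 \<nabla>f(q\<^sub>0)\<close>; the leapfrog position is
  \<open>q\<^sub>\<eta> - e(\<eta>)\<close>. Since \<open>e(0) = e'(0) = 0\<close> and
  \<open>\<parallel>e''(t)\<parallel> = \<parallel>\<nabla>f(q\<^sub>0) - \<nabla>f(q\<^sub>t)\<parallel> \<le> L \<parallel>q\<^sub>t - q\<^sub>0\<parallel> \<le> L (\<parallel>e(t)\<parallel> + \<kappa> t)\<close> with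
  \<open>\<kappa> = \<parallel>p\<^sub>0\<parallel> + \<parallel>\<nabla>f(q\<^sub>0)\<parallel>/\<surd>L\<close>, a bootstrap gives \<open>\<parallel>q\<^sub>t - q\<^sub>0\<parallel> \<le> 4/3 \<kappa> t\<close> and
  \<open>\<parallel>e(t)\<parallel> \<le> 2/9 L \<kappa> t\<^sup>3\<close>. By the descent lemma the energy error is at most
  \<open>-\<langle>\<nabla>f(q\<^sub>\<eta>), e(\<eta>)\<rangle> + L/2 \<parallel>e(\<eta>)\<parallel>\<^sup>2\<close>; all of this is \<open>O(L\<^sup>2\<kappa>\<^sup>2\<eta>\<^sup>4)\<close> except
  \<open>-\<langle>\<nabla>f(q\<^sub>0), e(\<eta>)\<rangle>\<close>, whose second derivative \<open>\<langle>\<nabla>f(q\<^sub>0), \<nabla>f(q\<^sub>t) - \<nabla>f(q\<^sub>0)\<rangle>\<close>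
  is at most \<open>(G\<^sub>t - G\<^sub>0)/2\<close> plus a Lipschitz error from comparing \<open>q\<^sub>t\<close> with the
  free motion \<open>q\<^sub>0 + t p\<^sub>0\<close>. Integrating twice gives the double integral.\<close>

lemma norm_increment_le_increment:
  fixes y :: "real \<Rightarrow> 'a::euclidean_space" and v :: "real \<Rightarrow> real"
  assumes T: "T \<in> {a..b}"
    and dy: "\<And>t. t \<in> {a..b} \<Longrightarrow> (y has_vector_derivative y' t) (at t within {a..b})"
    and dv: "\<And>t. t \<in> {a..b} \<Longrightarrow> (v has_real_derivative v' t) (at t within {a..b})"
    and le: "\<And>t. t \<in> {a..b} \<Longrightarrow> norm (y' t) \<le> v' t"
  shows "norm (y T - y a) \<le> v T - v a"
proof -
  have sub: "{a..T} \<subseteq> {a..b}" using T by auto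
  have y': "(y' has_integral (y T - y a)) {a..T}"
    using T sub by (intro fundamental_theorem_of_calculus)
      (auto intro: has_vector_derivative_within_subset[OF dy])
  have v': "(v' has_integral (v T - v a)) {a..T}"
    using T sub dv by (intro fundamental_theorem_of_calculus)
      (auto simp: has_real_derivative_iff_has_vector_derivative
        intro: has_vector_derivative_within_subset[where S = "{a..b}"])
  have "norm (integral {a..T} y') \<le> integral {a..T} v'"
    using y' v' le sub by (intro integral_norm_bound_integral) (auto simp: has_integral_integrable)
  then show ?thesis using y' v' by (simp add: integral_unique)
qed

lemma increment_le_increment:
  fixes u v :: "real \<Rightarrow> real"
  assumes T: "T \<in> {a..b}"
    and du: "\<And>t. t \<in> {a..b} \<Longrightarrow> (u has_real_derivative u' t) (at t within {a..b})"
    and dv: "\<And>t. t \<in> {a..b} \<Longrightarrow> (v has_real_derivative v' t) (at t within {a..b})"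
    and le: "\<And>t. t \<in> {a..b} \<Longrightarrow> u' t \<le> v' t"
  shows "u T - u a \<le> v T - v a"
proof -
  have "norm ((\<lambda>_. 0::real) T - (\<lambda>_. 0) a) \<le> (v T - u T) - (v a - u a)"
    by (rule norm_increment_le_increment[OF T, where y' = "\<lambda>_. 0" and v' = "\<lambda>t. v' t - u' t"])
      (use du dv le in \<open>auto intro!: derivative_eq_intros\<close>)
  then show ?thesis by simp
qed

lemma le_of_second_derivative_le:
  fixes u v :: "real \<Rightarrow> real"
  assumes T: "T \<in> {a..b}"
    and du: "\<And>t. t \<in> {a..b} \<Longrightarrow> (u has_real_derivative u' t) (at t within {a..b})"
    and du': "\<And>t. t \<in> {a..b} \<Longrightarrow> (u' has_real_derivative u'' t) (at t within {a..b})"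
    and dv: "\<And>t. t \<in> {a..b} \<Longrightarrow> (v has_real_derivative v' t) (at t within {a..b})"
    and dv': "\<And>t. t \<in> {a..b} \<Longrightarrow> (v' has_real_derivative v'' t) (at t within {a..b})"
    and le: "\<And>t. t \<in> {a..b} \<Longrightarrow> u'' t \<le> v'' t"
    and init: "u a \<le> v a" "u' a \<le> v' a"
  shows "u T \<le> v T"
proof -
  have "u' t \<le> v' t" if "t \<in> {a..b}" for t
    using increment_le_increment[OF that du' dv' le] init by simp
  then show ?thesis
    using increment_le_increment[OF T du dv] init by fastforce
qed

lemma norm_le_of_second_derivative_bound:
  fixes y :: "real \<Rightarrow> 'a::euclidean_space"
  assumes T: "T \<in> {0..S}"
    and dy: "\<And>t. t \<in> {0..S} \<Longrightarrow> (y has_vector_derivative y' t) (at t within {0..S})"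
    and dy': "\<And>t. t \<in> {0..S} \<Longrightarrow> (y' has_vector_derivative y'' t) (at t within {0..S})"
    and init: "y 0 = 0" "y' 0 = 0"
    and le: "\<And>t. t \<in> {0..S} \<Longrightarrow> norm (y'' t) \<le> A + B * t"
  shows "norm (y T) \<le> A * T^2 / 2 + B * T^3 / 6"
proof -
  have "((\<lambda>s. A * s + B * s^2 / 2) has_real_derivative A + B * t) (at t within {0..S})" for t
    by (auto intro!: derivative_eq_intros)
  then have "norm (y' t) \<le> A * t + B * t^2 / 2" if "t \<in> {0..S}" for t
    using norm_increment_le_increment[OF that dy', of "\<lambda>s. A * s + B * s^2 / 2" "\<lambda>s. A + B * s"]
      le init by simp
  moreover have "((\<lambda>s. A * s^2 / 2 + B * s^3 / 6) has_real_derivative A * t + B * t^2 / 2)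
      (at t within {0..S})" for t
    by (auto intro!: derivative_eq_intros simp: field_simps power2_eq_square)
  ultimately show ?thesis
    using norm_increment_le_increment[OF T dy,
        of "\<lambda>s. A * s^2 / 2 + B * s^3 / 6" "\<lambda>s. A * s + B * s^2 / 2"] init
    by simp
qed

lemma L_smooth_descent:
  fixes f :: "real^'n \<Rightarrow> real"
  assumes smooth: "L_smooth f gradf L"
  shows "f y - f x \<le> gradf x \<bullet> (y - x) + L / 2 * (norm (y - x))^2"
proof -
  define d where "d = y - x"
  have fd: "\<And>z. (f has_derivative (\<lambda>h. gradf z \<bullet> h)) (at z)"
    and lip: "\<And>z w. norm (gradf z - gradf w) \<le> L * norm (z - w)"
    using smooth by (auto simp: L_smooth_def)
  have line: "((\<lambda>s. f (x + s *\<^sub>R d)) has_real_derivative gradf (x + s *\<^sub>R d) \<bullet> d)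
      (at s within {0..1})" for s
  proof -
    have "((\<lambda>s. x + s *\<^sub>R d) has_derivative (\<lambda>h. h *\<^sub>R d)) (at s within {0..1})"
      by (auto intro!: derivative_eq_intros)
    from has_derivative_in_compose[OF this has_derivative_at_withinI[OF fd]]
    show ?thesis
      by (simp add: has_field_derivative_def mult.commute[of _ "gradf (x + s *\<^sub>R d) \<bullet> d"])
  qed
  have slope: "gradf (x + s *\<^sub>R d) \<bullet> d \<le> gradf x \<bullet> d + L * s * (norm d)^2" if "s \<in> {0..1}" for s
  proof -
    have "(gradf (x + s *\<^sub>R d) - gradf x) \<bullet> d \<le> norm (gradf (x + s *\<^sub>R d) - gradf x) * norm d"
      by (rule norm_cauchy_schwarz)
    also have "\<dots> \<le> L * norm (s *\<^sub>R d) * norm d"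
      using lip[of "x + s *\<^sub>R d" x] by (intro mult_right_mono) auto
    finally show ?thesis using that by (simp add: inner_diff_left power2_eq_square)
  qed
  have "((\<lambda>s. s * (gradf x \<bullet> d) + L * s^2 / 2 * (norm d)^2) has_real_derivative
      gradf x \<bullet> d + L * s * (norm d)^2) (at s within {0..1})" for s
    by (auto intro!: derivative_eq_intros simp: field_simps)
  from increment_le_increment[OF _ line this slope, of 1]
  have "f (x + 1 *\<^sub>R d) - f (x + 0 *\<^sub>R d) \<le> gradf x \<bullet> d + L / 2 * (norm d)^2"
    by simp
  then show ?thesis by (simp add: d_def)
qed

lemma inner_diff_le_half_norm_sq_diff:
  fixes a x :: "'a::real_inner"
  shows "a \<bullet> (x - a) \<le> ((norm x)^2 - (norm a)^2) / 2"
proof -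
  have "(norm x)^2 - (norm a)^2 = 2 * (a \<bullet> (x - a)) + (norm (x - a))^2"
    by (simp add: power2_norm_eq_inner inner_diff_left inner_diff_right inner_commute[of x a])
  then show ?thesis by simp
qed

locale hamiltonian_flow =
  fixes gradf :: "'a::euclidean_space \<Rightarrow> 'a"
    and L \<eta> :: real and q0 p0 :: 'a and q p :: "real \<Rightarrow> 'a"
  assumes gradf_lipschitz: "norm (gradf x - gradf y) \<le> L * norm (x - y)" and L_pos: "L > 0"
    and eta_pos: "\<eta> > 0" and eta_sq_L: "\<eta>^2 * L \<le> 1"
    and q_init: "q 0 = q0" and p_init: "p 0 = p0"
    and dq: "\<And>t. t \<in> {0..\<eta>} \<Longrightarrow> (q has_vector_derivative p t) (at t within {0..\<eta>})"
    and dp: "\<And>t. t \<in> {0..\<eta>} \<Longrightarrow> (p has_vector_derivative - gradf (q t)) (at t within {0..\<eta>})"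
begin

definition kappa :: real where
  "kappa = norm p0 + 1 / sqrt L * norm (gradf q0)"

definition G :: "real \<Rightarrow> real" where
  "G \<tau> = (norm (gradf (q0 + \<tau> *\<^sub>R p0)))^2"

definition err :: "real \<Rightarrow> 'a" where
  "err t = q t - q0 - t *\<^sub>R p0 + (t^2 / 2) *\<^sub>R gradf q0"

lemma kappa_nonneg: "kappa \<ge> 0"
  using L_pos by (simp add: kappa_def)

lemma norm_gradf_q0_le: "norm (gradf q0) \<le> sqrt L * kappa"
  using L_pos by (simp add: kappa_def algebra_simps)

lemma L_time_sq_le:
  assumes "t \<in> {0..\<eta>}" shows "L * t^2 \<le> 1"
proof -
  have "L * t^2 \<le> L * \<eta>^2" using assms L_pos by (intro mult_left_mono power_mono) auto
  then show ?thesis using eta_sq_L by (simp add: mult.commute)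
qed

lemma time_sqrt_L_le:
  assumes "t \<in> {0..\<eta>}" shows "t * sqrt L \<le> 1"
proof -
  have "t * sqrt L = sqrt (L * t^2)" using assms by (simp add: real_sqrt_mult mult.commute)
  then show ?thesis using L_time_sq_le[OF assms] by simp
qed

lemma err_has_derivative:
  assumes "t \<in> {0..\<eta>}"
  shows "(err has_vector_derivative p t - p0 + t *\<^sub>R gradf q0) (at t within {0..\<eta>})"
  unfolding err_def using assms by (auto intro!: derivative_eq_intros dq)

lemma err_derivative_has_derivative:
  assumes "t \<in> {0..\<eta>}"
  shows "((\<lambda>s. p s - p0 + s *\<^sub>R gradf q0) has_vector_derivative gradf q0 - gradf (q t))
    (at t within {0..\<eta>})"
  using assms by (auto intro!: derivative_eq_intros dp)

lemma norm_err_le_of_displacement_bound: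
  assumes D: "\<And>s. s \<in> {0..\<eta>} \<Longrightarrow> norm (q s - q0) \<le> A + B * s" and t: "t \<in> {0..\<eta>}"
  shows "norm (err t) \<le> L * A * t^2 / 2 + L * B * t^3 / 6"
proof -
  have "norm (gradf q0 - gradf (q s)) \<le> L * A + L * B * s" if "s \<in> {0..\<eta>}" for s
  proof -
    have "norm (gradf q0 - gradf (q s)) \<le> L * norm (q s - q0)"
      using gradf_lipschitz[of q0 "q s"] by (simp add: norm_minus_commute)
    also have "\<dots> \<le> L * (A + B * s)" using D[OF that] L_pos by simp
    finally show ?thesis by (simp add: algebra_simps)
  qed
  then show ?thesis
    using norm_le_of_second_derivative_bound[OF t err_has_derivative err_derivative_has_derivative]
      q_init p_init by (simp add: err_def)
qed

lemma displacement_le_err: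
  assumes t: "t \<in> {0..\<eta>}"
  shows "norm (q t - q0) \<le> norm (err t) + kappa * t"
proof -
  have "q t - q0 = err t + (t *\<^sub>R p0 - (t^2 / 2) *\<^sub>R gradf q0)" by (simp add: err_def)
  then have "norm (q t - q0) \<le> norm (err t) + norm (t *\<^sub>R p0 - (t^2 / 2) *\<^sub>R gradf q0)"
    by (simp add: norm_triangle_ineq)
  also have "\<dots> \<le> norm (err t) + (t * norm p0 + t * (t / 2 * norm (gradf q0)))"
    using norm_triangle_ineq4[of "t *\<^sub>R p0" "(t^2 / 2) *\<^sub>R gradf q0"] t
    by (simp add: power2_eq_square)
  also have "\<dots> \<le> norm (err t) + (t * norm p0 + t * (1 / sqrt L * norm (gradf q0)))"
  proof -
    have "t \<le> 1 / sqrt L" using time_sqrt_L_le[OF t] L_pos by (simp add: field_simps)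
    then have "t / 2 * norm (gradf q0) \<le> 1 / sqrt L * norm (gradf q0)"
      using t by (intro mult_right_mono) auto
    then show ?thesis using t by (intro add_left_mono mult_left_mono) auto
  qed
  finally show ?thesis by (simp add: kappa_def distrib_left mult.commute)
qed

lemma displacement_crude_bound:
  assumes t: "t \<in> {0..\<eta>}"
  shows "norm (q t - q0) \<le> 2 * kappa * t"
proof -
  have "continuous_on {0..\<eta>} q"
    using dq continuous_on_eq_continuous_within has_vector_derivative_continuous by blast
  then have "continuous_on {0..\<eta>} (\<lambda>s. norm (q s - q0))"
    by (intro continuous_intros)
  then obtain tm where tm: "tm \<in> {0..\<eta>}"
    and max: "\<And>s. s \<in> {0..\<eta>} \<Longrightarrow> norm (q s - q0) \<le> norm (q tm - q0)"
    using continuous_attains_sup[OF compact_Icc] eta_pos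
    by (metis atLeastAtMost_iff empty_iff less_eq_real_def)
  define M where "M = norm (q tm - q0)"
  txt \<open>\<open>M \<le> L M \<eta>\<^sup>2/2 + \<kappa> \<eta> \<le> M/2 + \<kappa> \<eta>\<close>.\<close>
  have err_le: "norm (err s) \<le> L * M * s^2 / 2" if "s \<in> {0..\<eta>}" for s
    using norm_err_le_of_displacement_bound[of M 0, OF _ that] max by (simp add: M_def)
  have "M \<le> M * (L * tm^2) / 2 + kappa * \<eta>"
  proof -
    have "M \<le> M * (L * tm^2) / 2 + kappa * tm"
      using displacement_le_err[OF tm] err_le[OF tm] by (simp add: M_def mult_ac)
    moreover have "kappa * tm \<le> kappa * \<eta>" using tm kappa_nonneg by (simp add: mult_left_mono)
    ultimately show ?thesis by linarith
  qed
  moreover have "M * (L * tm^2) \<le> M" using L_time_sq_le[OF tm] by (simp add: M_def mult_left_le)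
  ultimately have M_le: "M \<le> 2 * kappa * \<eta>" by linarith
  have "L * M * t^2 / 2 \<le> L * (2 * kappa * \<eta>) * t^2 / 2"
    using M_le L_pos by (intro divide_right_mono mult_right_mono mult_left_mono) auto
  also have "\<dots> = (L * t * \<eta>) * (kappa * t)" by (simp add: power2_eq_square)
  also have "\<dots> \<le> kappa * t"
  proof -
    have "L * t * \<eta> \<le> L * \<eta>^2" using t L_pos by (simp add: power2_eq_square mult_right_mono)
    then have "L * t * \<eta> \<le> 1" using eta_sq_L by (simp add: mult.commute)
    then show ?thesis
      using t kappa_nonneg L_pos eta_pos by (intro mult_left_le_one_le) auto
  qed
  finally show ?thesis using displacement_le_err[OF t] err_le[OF t] by simp
qed

lemma displacement_bound:
  assumes t: "t \<in> {0..\<eta>}"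
  shows "norm (q t - q0) \<le> 4/3 * kappa * t"
proof -
  have "norm (err t) \<le> (L * t^2) * (kappa * t) / 3"
    using norm_err_le_of_displacement_bound[of 0 "2 * kappa", OF _ t] displacement_crude_bound
    by (simp add: power2_eq_square power3_eq_cube mult_ac)
  also have "\<dots> \<le> kappa * t / 3"
    using L_time_sq_le[OF t] t kappa_nonneg L_pos
    by (intro divide_right_mono mult_left_le_one_le) auto
  finally show ?thesis using displacement_le_err[OF t] by simp
qed

lemma err_bound:
  assumes t: "t \<in> {0..\<eta>}"
  shows "norm (err t) \<le> 2/9 * L * kappa * t^3"
  using norm_err_le_of_displacement_bound[of 0 "4/3 * kappa", OF _ t] displacement_bound
  by (simp add: mult_ac)

lemma drift_bound:
  assumes t: "t \<in> {0..\<eta>}"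
  shows "norm (q t - q0 - t *\<^sub>R p0) \<le> norm (gradf q0) * t^2 / 2 + 2/9 * L * kappa * t^3"
proof -
  have "q t - q0 - t *\<^sub>R p0 = err t - (t^2 / 2) *\<^sub>R gradf q0" by (simp add: err_def)
  then have "norm (q t - q0 - t *\<^sub>R p0) \<le> norm (err t) + norm ((t^2 / 2) *\<^sub>R gradf q0)"
    by (metis norm_triangle_ineq4)
  then show ?thesis using err_bound[OF t] t by (simp add: mult.commute)
qed

lemma cross_term_bound:
  "\<bar>(gradf (q \<eta>) - gradf q0) \<bullet> err \<eta>\<bar> \<le> 8/27 * (L * kappa * \<eta>^2)^2"
proof -
  have \<eta>: "\<eta> \<in> {0..\<eta>}" using eta_pos by simp
  have "\<bar>(gradf (q \<eta>) - gradf q0) \<bullet> err \<eta>\<bar> \<le> norm (gradf (q \<eta>) - gradf q0) * norm (err \<eta>)"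
    by (rule Cauchy_Schwarz_ineq2)
  also have "\<dots> \<le> (L * (4/3 * kappa * \<eta>)) * (2/9 * L * kappa * \<eta>^3)"
  proof (rule mult_mono)
    show "norm (gradf (q \<eta>) - gradf q0) \<le> L * (4/3 * kappa * \<eta>)"
      using gradf_lipschitz[of "q \<eta>" q0] displacement_bound[OF \<eta>] L_pos
      by (meson mult_left_mono less_imp_le order_trans)
  qed (use err_bound[OF \<eta>] L_pos kappa_nonneg eta_pos in auto)
  also have "\<dots> = 8/27 * (L * kappa * \<eta>^2)^2"
    by (simp add: power2_eq_square power3_eq_cube power4_eq_xxxx)
  finally show ?thesis .
qed

lemma quadratic_term_bound: "L / 2 * (norm (err \<eta>))^2 \<le> 2/81 * (L * kappa * \<eta>^2)^2"
proof -
  have \<eta>: "\<eta> \<in> {0..\<eta>}" using eta_pos by simp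
  have "(norm (err \<eta>))^2 \<le> (2/9 * L * kappa * \<eta>^3)^2"
    using err_bound[OF \<eta>] by (simp add: power_mono)
  then have "L / 2 * (norm (err \<eta>))^2 \<le> L / 2 * (2/9 * L * kappa * \<eta>^3)^2"
    using L_pos by (simp add: mult_left_mono)
  also have "\<dots> = (2/81 * (L * kappa * \<eta>^2)^2) * (\<eta>^2 * L)"
    by (simp add: power2_eq_square power3_eq_cube power4_eq_xxxx)
  also have "\<dots> \<le> 2/81 * (L * kappa * \<eta>^2)^2"
    using eta_sq_L by (intro mult_left_le) auto
  finally show ?thesis .
qed

lemma continuous_on_G: "continuous_on UNIV G"
proof -
  have "L-lipschitz_on UNIV gradf"
    by (rule lipschitz_onI) (use gradf_lipschitz L_pos in \<open>auto simp: dist_norm\<close>)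
  then have "continuous_on UNIV gradf"
    by (rule lipschitz_on_continuous_on)
  then have "continuous_on UNIV (\<lambda>\<tau>. gradf (q0 + \<tau> *\<^sub>R p0))"
    by (rule continuous_on_compose2) (auto intro!: continuous_intros)
  then show ?thesis
    unfolding G_def by (intro continuous_intros)
qed

lemma inner_err''_le:
  assumes t: "t \<in> {0..\<eta>}"
  shows "- (gradf q0 \<bullet> (gradf q0 - gradf (q t)))
    \<le> 1/2 * (G t - G 0)
      + norm (gradf q0) * L * (norm (gradf q0) * t^2 / 2 + 2/9 * L * kappa * t^3)"
proof -
  define x where "x = gradf (q0 + t *\<^sub>R p0)"
  have "- (gradf q0 \<bullet> (gradf q0 - gradf (q t)))
      = gradf q0 \<bullet> (x - gradf q0) + gradf q0 \<bullet> (gradf (q t) - x)"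
    by (simp add: inner_diff_right)
  moreover have "gradf q0 \<bullet> (x - gradf q0) \<le> 1/2 * (G t - G 0)"
    using inner_diff_le_half_norm_sq_diff[of "gradf q0" x] by (simp add: G_def x_def)
  moreover have "gradf q0 \<bullet> (gradf (q t) - x) \<le> norm (gradf q0) * norm (gradf (q t) - x)"
    by (rule norm_cauchy_schwarz)
  moreover have "norm (gradf (q t) - x) \<le> L * norm (q t - q0 - t *\<^sub>R p0)"
    using gradf_lipschitz[of "q t" "q0 + t *\<^sub>R p0"] by (simp add: x_def algebra_simps)
  ultimately show ?thesis
    using drift_bound[OF t] L_pos
    by (smt (verit, best) mult.assoc mult_left_mono mult_nonneg_nonneg norm_ge_zero)
qed

lemma first_order_polynomial_le:
  "norm (gradf q0) * L * (norm (gradf q0) * \<eta>^4 / 24 + L * kappa * \<eta>^5 / 90)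
    \<le> (1/24 + 1/90) * (L * kappa * \<eta>^2)^2"
proof -
  define b where "b = norm (gradf q0)"
  have b: "b \<le> sqrt L * kappa" "b \<ge> 0" using norm_gradf_q0_le by (auto simp: b_def)
  have "b^2 \<le> (sqrt L * kappa)^2" using b by (intro power_mono)
  also have "\<dots> = L * kappa^2" using L_pos by (simp add: power_mult_distrib)
  finally have b_sq: "b^2 \<le> L * kappa^2" .
  have "b * \<eta> \<le> (\<eta> * sqrt L) * kappa"
    using mult_right_mono[OF b(1), of \<eta>] eta_pos by (simp add: mult_ac)
  also have "\<dots> \<le> kappa"
    using time_sqrt_L_le[of \<eta>] eta_pos L_pos kappa_nonneg by (intro mult_left_le_one_le) auto
  finally have b_eta: "b * \<eta> \<le> kappa" .
  have "b^2 * (L * \<eta>^4 / 24) \<le> (L * kappa^2) * (L * \<eta>^4 / 24)"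
    using b_sq L_pos by (intro mult_right_mono) auto
  moreover have "(b * \<eta>) * (L^2 * kappa * \<eta>^4 / 90) \<le> kappa * (L^2 * kappa * \<eta>^4 / 90)"
    using b_eta kappa_nonneg by (intro mult_right_mono) auto
  ultimately show ?thesis
    unfolding b_def[symmetric] by (simp add: algebra_simps power2_eq_square eval_nat_numeral)
qed

lemma first_order_term_bound:
  "- (gradf q0 \<bullet> err \<eta>) \<le> 1/2 * integral {0..\<eta>} (\<lambda>s. integral {0..s} (\<lambda>\<tau>. G \<tau> - G 0))
     + (1/24 + 1/90) * (L * kappa * \<eta>^2)^2"
proof -
  define b where "b = norm (gradf q0)"
  define I1 where "I1 s = integral {0..s} (\<lambda>\<tau>. G \<tau> - G 0)" for s
  define I2 where "I2 s = integral {0..s} I1" for s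
  have "continuous_on {0..\<eta>} (\<lambda>\<tau>. G \<tau> - G 0)"
    using continuous_on_G by (intro continuous_intros) (auto intro: continuous_on_subset)
  then have dI1: "(I1 has_real_derivative G t - G 0) (at t within {0..\<eta>})"
    if "t \<in> {0..\<eta>}" for t
    unfolding I1_def using that by (rule integral_has_real_derivative)
  then have "continuous_on {0..\<eta>} I1"
    by (meson DERIV_continuous continuous_on_eq_continuous_within)
  then have dI2: "(I2 has_real_derivative I1 t) (at t within {0..\<eta>})" if "t \<in> {0..\<eta>}" for t
    unfolding I2_def using that by (rule integral_has_real_derivative)
  define \<Psi> where "\<Psi> t = 1/2 * I2 t + b * L * (b * t^4 / 24 + L * kappa * t^5 / 90)" for t
  define \<Psi>' where "\<Psi>' t = 1/2 * I1 t + b * L * (b * t^3 / 6 + L * kappa * t^4 / 18)" for t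
  define \<Psi>'' where
    "\<Psi>'' t = 1/2 * (G t - G 0) + b * L * (b * t^2 / 2 + 2/9 * L * kappa * t^3)" for t
  have d\<Psi>: "(\<Psi> has_real_derivative \<Psi>' t) (at t within {0..\<eta>})" if "t \<in> {0..\<eta>}" for t
    unfolding \<Psi>_def \<Psi>'_def
    by (auto intro!: derivative_eq_intros dI2[OF that] simp: field_simps)
  have d\<Psi>': "(\<Psi>' has_real_derivative \<Psi>'' t) (at t within {0..\<eta>})" if "t \<in> {0..\<eta>}" for t
    unfolding \<Psi>'_def \<Psi>''_def
    by (auto intro!: derivative_eq_intros dI1[OF that] simp: field_simps)
  have d\<phi>: "((\<lambda>t. - (gradf q0 \<bullet> err t)) has_real_derivative
      - (gradf q0 \<bullet> (p t - p0 + t *\<^sub>R gradf q0))) (at t within {0..\<eta>})"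
    if "t \<in> {0..\<eta>}" for t
    unfolding has_real_derivative_iff_has_vector_derivative
    by (intro has_vector_derivative_minus err_has_derivative[OF that]
        bounded_linear.has_vector_derivative[OF bounded_linear_inner_right])
  have d\<phi>': "((\<lambda>t. - (gradf q0 \<bullet> (p t - p0 + t *\<^sub>R gradf q0))) has_real_derivative
      - (gradf q0 \<bullet> (gradf q0 - gradf (q t)))) (at t within {0..\<eta>})"
    if "t \<in> {0..\<eta>}" for t
    unfolding has_real_derivative_iff_has_vector_derivative
    by (intro has_vector_derivative_minus err_derivative_has_derivative[OF that]
        bounded_linear.has_vector_derivative[OF bounded_linear_inner_right])
  have "- (gradf q0 \<bullet> err \<eta>) \<le> \<Psi> \<eta>"
    by (rule le_of_second_derivative_le[OF _ d\<phi> d\<phi>' d\<Psi> d\<Psi>'])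
      (use eta_pos q_init p_init inner_err''_le
        in \<open>auto simp: err_def b_def \<Psi>_def \<Psi>'_def \<Psi>''_def I1_def I2_def\<close>)
  then show ?thesis
    using first_order_polynomial_le
    unfolding \<Psi>_def I2_def I1_def[abs_def] b_def by linarith
qed

end

theorem lemma4:
  fixes f :: "real^'n \<Rightarrow> real" and gradf :: "real^'n \<Rightarrow> real^'n"
    and L \<eta> :: real and q0 p0 :: "real^'n" and q p :: "real \<Rightarrow> real^'n"
  assumes smooth: "L_smooth f gradf L" and Lpos: "L > 0"
    and eta: "\<eta> > 0" "\<eta>^2 * L \<le> 1"
    and init: "q 0 = q0" "p 0 = p0"
    and dq: "\<And>t. t \<in> {0..\<eta>} \<Longrightarrow> (q has_vector_derivative p t) (at t within {0..\<eta>})"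
    and dp: "\<And>t. t \<in> {0..\<eta>} \<Longrightarrow> (p has_vector_derivative - gradf (q t)) (at t within {0..\<eta>})"
  shows "f (q0 + \<eta> *\<^sub>R p0 - (\<eta>^2 / 2) *\<^sub>R gradf q0) - f (q \<eta>)
     \<le> 1/2 * integral {0..\<eta>} (\<lambda>s. integral {0..s}
              (\<lambda>\<tau>. (norm (gradf (q0 + \<tau> *\<^sub>R p0)))^2 - (norm (gradf q0))^2))
       + 3/4 * \<eta>^4 * L^2 * (norm p0 + 1 / sqrt L * norm (gradf q0))^2"
proof -
  interpret hamiltonian_flow gradf L \<eta> q0 p0 q p
    by (rule hamiltonian_flow.intro) (use assms in \<open>auto simp: L_smooth_def\<close>)
  define X where "X = (L * kappa * \<eta>^2)^2"
  have G_diff: "(\<lambda>\<tau>. G \<tau> - G 0)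
      = (\<lambda>\<tau>. (norm (gradf (q0 + \<tau> *\<^sub>R p0)))^2 - (norm (gradf q0))^2)"
    by (simp add: G_def)
  have "q0 + \<eta> *\<^sub>R p0 - (\<eta>^2 / 2) *\<^sub>R gradf q0 - q \<eta> = - err \<eta>"
    by (simp add: err_def)
  then have "f (q0 + \<eta> *\<^sub>R p0 - (\<eta>^2 / 2) *\<^sub>R gradf q0) - f (q \<eta>)
      \<le> - (gradf (q \<eta>) \<bullet> err \<eta>) + L / 2 * (norm (err \<eta>))^2"
    using L_smooth_descent[OF smooth] by (metis inner_minus_right norm_minus_cancel)
  also have "\<dots> = - (gradf q0 \<bullet> err \<eta>) + - ((gradf (q \<eta>) - gradf q0) \<bullet> err \<eta>)
      + L / 2 * (norm (err \<eta>))^2"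
    by (simp add: inner_diff_left)
  also have "\<dots> \<le> (1/2 * integral {0..\<eta>} (\<lambda>s. integral {0..s} (\<lambda>\<tau>. G \<tau> - G 0))
      + (1/24 + 1/90) * X) + 8/27 * X + 2/81 * X"
    unfolding X_def
    using first_order_term_bound order_trans[OF abs_ge_minus_self cross_term_bound]
      quadratic_term_bound
    by (intro add_mono)
  also have "\<dots> \<le> 1/2 * integral {0..\<eta>} (\<lambda>s. integral {0..s} (\<lambda>\<tau>. G \<tau> - G 0))
      + 3/4 * \<eta>^4 * L^2 * kappa^2"
    by (simp add: X_def power_mult_distrib flip: power_mult)
  finally show ?thesis
    unfolding G_diff kappa_def .
qed

end
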